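(* Let $p\in[1,\infty]$, $d\in\mathbb N$, $m_0:=d$, $m_1\le m_2\le\cdots$ positive integers, and $\mathbf W_n\in\mathbb R^{m_n\times m_{n-1}}$ for $n\in\mathbb N$. If $\mathbf W_n=\mathbf I_{m_n,m_{n-1}}+\mathbf P_n$ with $\sum_{n=1}^\infty\|\mathbf P_n\|_p<\infty$, then $\lim_{n\to\infty}\mathbf I_{\infty,m_n}\mathbf W_n\mathbf W_{n-1}\cdots\mathbf W_1$ exists in $\mathcal B(\mathbb R^d,\ell^p)$.
   Context: $\|\cdot\|_p$ on matrices denotes the operator norm induced by the $\ell^p$ vector norms. For $m'\ge m$, $\mathbf I_{m',m}$ is the $m'\times m$ matrix with top $m\times m$ block the identity and the remaining entries zero; $\mathbf I_{\infty,m}$ is the analogous matrix with infinitely many rows (the embedding $\mathbb R^m\to\ell^p$). $\mathcal B(\mathbb R^d,\ell^p)$ is the Banach space of bounded linear operators $\mathbb R^d\to\ell^p$ with the induced operator norm. *)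

theory Defs
  imports "HOL-Analysis.Analysis"
begin

text \<open>Real sequences x :: nat => real model both l^p and R^k (the latter as
sequences vanishing from index k on). The exponent p ranges over [1, infinity] as an ereal.\<close>

definition lp_norm :: "ereal \<Rightarrow> (nat \<Rightarrow> real) \<Rightarrow> real" where
  "lp_norm p x =
     (if p = \<infinity> then (SUP i. \<bar>x i\<bar>)
      else (\<Sum>i. \<bar>x i\<bar> powr real_of_ereal p) powr (1 / real_of_ereal p))"

definition in_lp :: "ereal \<Rightarrow> (nat \<Rightarrow> real) \<Rightarrow> bool" where
  "in_lp p x =
     (if p = \<infinity> then bdd_above (range (\<lambda>i. \<bar>x i\<bar>))
      else summable (\<lambda>i. \<bar>x i\<bar> powr real_of_ereal p))"

definition mat_opnorm_inf :: "ereal \<Rightarrow> nat \<Rightarrow> (nat \<Rightarrow> nat \<Rightarrow> real) \<Rightarrow> real" where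
  "mat_opnorm_inf p k M =
     (SUP x \<in> {x. (\<forall>j\<ge>k. x j = 0) \<and> lp_norm p x \<le> 1}.
        lp_norm p (\<lambda>i. \<Sum>j<k. M i j * x j))"

definition mat_opnorm :: "ereal \<Rightarrow> nat \<Rightarrow> nat \<Rightarrow> (nat \<Rightarrow> nat \<Rightarrow> real) \<Rightarrow> real" where
  "mat_opnorm p r k M = mat_opnorm_inf p k (\<lambda>i j. if i < r then M i j else 0)"

text \<open>The matrix I_{a,b} (entries for i<a, j<b).\<close>
definition Imat :: "nat \<Rightarrow> nat \<Rightarrow> real" where
  "Imat i j = (if i = j then 1 else 0)"

text \<open>The product W_n W_{n-1} ... W_1 (an m_n x d matrix); W_0 is unused,
the empty product is the d x d identity.\<close>
fun mat_prod :: "(nat \<Rightarrow> nat) \<Rightarrow> (nat \<Rightarrow> nat \<Rightarrow> nat \<Rightarrow> real) \<Rightarrow> nat \<Rightarrow> nat \<Rightarrow> nat \<Rightarrow> real" where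
  "mat_prod m W 0 i j = Imat i j"
| "mat_prod m W (Suc n) i j = (\<Sum>k<m n. W (Suc n) i k * mat_prod m W n k j)"

definition embedded_prod :: "(nat \<Rightarrow> nat) \<Rightarrow> (nat \<Rightarrow> nat \<Rightarrow> nat \<Rightarrow> real) \<Rightarrow> nat \<Rightarrow> nat \<Rightarrow> nat \<Rightarrow> real" where
  "embedded_prod m W n i j = (if i < m n then mat_prod m W n i j else 0)"

end

theory Submission
  imports Defs
begin

text \<open>Write \<open>E n = I(\<infinity>, m n) W n \<cdots> W 1\<close>. Because \<open>m n \<le> m (n + 1)\<close>, one step of the product is
  \<open>E (n + 1) x = E n x + P (n + 1) (E n x)\<close>, so \<open>\<parallel>E (n + 1) x - E n x\<parallel> \<le> \<parallel>P (n + 1)\<parallel> \<parallel>E n x\<parallel>\<close>.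
  A discrete Gronwall argument bounds \<open>\<parallel>E n\<parallel>\<close> by \<open>\<parallel>E 1\<parallel> exp (\<Sum>k. \<parallel>P k\<parallel>)\<close>, and telescoping then
  bounds \<open>\<parallel>E K - E n\<parallel>\<close> by a constant times the tail \<open>\<Sum>k\<ge>n. \<parallel>P (k + 1)\<parallel>\<close>. Hence the entries of
  \<open>E n\<close> converge, and the estimates pass to the entrywise limit by Fatou's lemma for \<open>\<ell>\<^sup>p\<close>
  norms; this gives both the convergence in operator norm and that the columns of the limit
  lie in \<open>\<ell>\<^sup>p\<close>.\<close>

section \<open>\<open>\<ell>\<^sup>p\<close> norms of real sequences\<close>

lemma real_of_ereal_ge_1: "1 \<le> p \<Longrightarrow> p \<noteq> \<infinity> \<Longrightarrow> 1 \<le> real_of_ereal p"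
  by (cases p) auto

lemma powr_convex_combination_le:
  fixes q u v t :: real
  assumes q: "1 \<le> q" and u: "0 \<le> u" and v: "0 \<le> v" and t: "0 \<le> t" "t \<le> 1"
  shows "(t * u + (1 - t) * v) powr q \<le> t * u powr q + (1 - t) * v powr q"
proof -
  have powr_le_self: "s powr q \<le> s" if "0 \<le> s" "s \<le> 1" for s :: real
  proof (cases "s = 0")
    case False
    then have "s powr q \<le> s powr 1" using that q by (intro powr_mono') auto
    then show ?thesis using False that by simp
  qed simp
  consider "u = 0" | "v = 0" | "0 < u" "0 < v"
    using u v by linarith
  then show ?thesis
  proof cases
    case 1
    have "((1 - t) * v) powr q = (1 - t) powr q * v powr q" using t v by (simp add: powr_mult)
    also have "\<dots> \<le> (1 - t) * v powr q" using powr_le_self[of "1 - t"] t by (intro mult_right_mono) auto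
    finally show ?thesis using 1 by simp
  next
    case 2
    have "(t * u) powr q = t powr q * u powr q" using t u by (simp add: powr_mult)
    also have "\<dots> \<le> t * u powr q" using powr_le_self[of t] t by (intro mult_right_mono) auto
    finally show ?thesis using 2 by simp
  next
    case 3
    show ?thesis
      using convex_onD[OF powr_convex[OF q], of "1 - t" u v] 3 t by simp
  qed
qed

lemma in_lp_finite_support: "(\<forall>i\<ge>K. x i = 0) \<Longrightarrow> in_lp p x"
proof -
  assume K: "\<forall>i\<ge>K. x i = 0"
  have "\<bar>x i\<bar> \<le> (\<Sum>i<K. \<bar>x i\<bar>)" for i
    using K member_le_sum[of i "{..<K}" "\<lambda>i. \<bar>x i\<bar>"] sum_nonneg[of "{..<K}" "\<lambda>i. \<bar>x i\<bar>"]
    by (cases "i < K") auto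
  then have "bdd_above (range (\<lambda>i. \<bar>x i\<bar>))" by (rule bdd_aboveI2)
  moreover have "summable (\<lambda>i. \<bar>x i\<bar> powr real_of_ereal p)"
    by (rule summable_finite[of "{..<K}"]) (use K in auto)
  ultimately show ?thesis by (simp add: in_lp_def)
qed

lemma lp_norm_zero [simp]: "lp_norm p (\<lambda>i. 0) = 0"
  by (simp add: lp_norm_def)

lemma lp_norm_minus_commute: "lp_norm p (\<lambda>i. x i - y i) = lp_norm p (\<lambda>i. y i - x i)"
  by (simp add: lp_norm_def abs_minus_commute)

lemma abs_le_lp_norm:
  assumes p: "1 \<le> p" and x: "in_lp p x"
  shows "\<bar>x i\<bar> \<le> lp_norm p x"
proof (cases "p = \<infinity>")
  case True
  then have "bdd_above (range (\<lambda>i. \<bar>x i\<bar>))" using x by (simp add: in_lp_def)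
  then have "\<bar>x i\<bar> \<le> (SUP i. \<bar>x i\<bar>)" by (rule cSUP_upper[rotated]) auto
  then show ?thesis using True by (simp add: lp_norm_def)
next
  case False
  define q where "q = real_of_ereal p"
  have q: "1 \<le> q" using real_of_ereal_ge_1[OF p False] q_def by simp
  have "summable (\<lambda>i. \<bar>x i\<bar> powr q)" using x False by (simp add: in_lp_def q_def)
  then have "(\<Sum>i\<in>{i}. \<bar>x i\<bar> powr q) \<le> (\<Sum>i. \<bar>x i\<bar> powr q)"
    by (rule sum_le_suminf) auto
  then have "(\<bar>x i\<bar> powr q) powr (1/q) \<le> (\<Sum>i. \<bar>x i\<bar> powr q) powr (1/q)"
    using q by (intro powr_mono2) auto
  then show ?thesis using q False by (simp add: lp_norm_def q_def powr_powr)
qed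

lemma lp_norm_nonneg: "1 \<le> p \<Longrightarrow> in_lp p x \<Longrightarrow> 0 \<le> lp_norm p x"
  using abs_le_lp_norm[of p x 0] by linarith

lemma lp_norm_eq_0_iff:
  "1 \<le> p \<Longrightarrow> in_lp p x \<Longrightarrow> lp_norm p x = 0 \<longleftrightarrow> x = (\<lambda>i. 0)"
  using abs_le_lp_norm[of p x] by fastforce

lemma lp_norm_unit_vector_le: "1 \<le> p \<Longrightarrow> lp_norm p (\<lambda>i. if i = j then 1 else 0) \<le> 1"
proof (cases "p = \<infinity>")
  case True
  have "(SUP i. \<bar>if i = j then 1 else 0::real\<bar>) \<le> 1" by (rule cSUP_least) auto
  then show ?thesis using True by (simp add: lp_norm_def)
next
  case False
  have "(\<lambda>i. \<bar>if i = j then 1 else 0::real\<bar> powr real_of_ereal p) = (\<lambda>i. if i = j then 1 else 0)"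
    by auto
  then have "(\<Sum>i. \<bar>if i = j then 1 else 0::real\<bar> powr real_of_ereal p) = 1"
    using sums_single[of j "\<lambda>_. 1::real"] by (simp add: sums_iff)
  then show ?thesis using False by (simp add: lp_norm_def)
qed

lemma lp_mult:
  assumes p: "1 \<le> p" and x: "in_lp p x"
  shows "in_lp p (\<lambda>i. c * x i) \<and> lp_norm p (\<lambda>i. c * x i) \<le> \<bar>c\<bar> * lp_norm p x"
proof (cases "p = \<infinity>")
  case True
  then have bdd: "bdd_above (range (\<lambda>i. \<bar>x i\<bar>))" using x by (simp add: in_lp_def)
  have le: "\<bar>c * x i\<bar> \<le> \<bar>c\<bar> * (SUP i. \<bar>x i\<bar>)" for i
  proof -
    have "\<bar>x i\<bar> \<le> (SUP i. \<bar>x i\<bar>)" using bdd by (rule cSUP_upper[rotated]) auto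
    then show ?thesis by (simp add: abs_mult mult_left_mono)
  qed
  then have "bdd_above (range (\<lambda>i. \<bar>c * x i\<bar>))" by (rule bdd_aboveI2)
  moreover have "(SUP i. \<bar>c * x i\<bar>) \<le> \<bar>c\<bar> * (SUP i. \<bar>x i\<bar>)" using le by (intro cSUP_least) auto
  ultimately show ?thesis using True by (simp add: in_lp_def lp_norm_def)
next
  case False
  define q where "q = real_of_ereal p"
  have q: "1 \<le> q" using real_of_ereal_ge_1[OF p False] q_def by simp
  have sx: "summable (\<lambda>i. \<bar>x i\<bar> powr q)" using x False by (simp add: in_lp_def q_def)
  have eq: "(\<lambda>i. \<bar>c * x i\<bar> powr q) = (\<lambda>i. \<bar>c\<bar> powr q * \<bar>x i\<bar> powr q)"
    by (simp add: abs_mult powr_mult)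
  have "(\<Sum>i. \<bar>c * x i\<bar> powr q) powr (1/q) = (\<bar>c\<bar> powr q * (\<Sum>i. \<bar>x i\<bar> powr q)) powr (1/q)"
    unfolding eq by (simp add: suminf_mult[OF sx])
  also have "\<dots> = \<bar>c\<bar> * (\<Sum>i. \<bar>x i\<bar> powr q) powr (1/q)"
    using q by (simp add: powr_mult powr_powr suminf_nonneg[OF sx])
  finally show ?thesis using summable_mult[OF sx] False eq by (simp add: in_lp_def lp_norm_def q_def)
qed

lemma abs_add_powr_le:
  fixes q a b u v :: real
  assumes q: "1 \<le> q" and a: "0 < a" and b: "0 < b"
  shows "\<bar>u + v\<bar> powr q \<le> (a + b) powr q * (a / (a + b) * (\<bar>u\<bar> / a) powr q + b / (a + b) * (\<bar>v\<bar> / b) powr q)"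
proof -
  define t where "t = a / (a + b)"
  have t: "0 \<le> t" "t \<le> 1" "1 - t = b / (a + b)"
    using a b by (auto simp: t_def field_simps)
  have "(a + b) * (t * (\<bar>u\<bar> / a)) = \<bar>u\<bar>" "(a + b) * ((1 - t) * (\<bar>v\<bar> / b)) = \<bar>v\<bar>"
    unfolding t(3) using a b by (simp_all add: t_def)
  then have split: "\<bar>u\<bar> + \<bar>v\<bar> = (a + b) * (t * (\<bar>u\<bar> / a) + (1 - t) * (\<bar>v\<bar> / b))"
    by (simp add: distrib_left)
  have "\<bar>u + v\<bar> powr q \<le> (\<bar>u\<bar> + \<bar>v\<bar>) powr q"
    using q by (intro powr_mono2) (auto simp: abs_triangle_ineq)
  also note split
  also have "((a + b) * (t * (\<bar>u\<bar> / a) + (1 - t) * (\<bar>v\<bar> / b))) powr q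
      = (a + b) powr q * (t * (\<bar>u\<bar> / a) + (1 - t) * (\<bar>v\<bar> / b)) powr q"
    by (rule powr_mult)
  also have "\<dots> \<le> (a + b) powr q * (t * (\<bar>u\<bar> / a) powr q + (1 - t) * (\<bar>v\<bar> / b) powr q)"
    by (intro mult_left_mono powr_convex_combination_le) (use a b t q in auto)
  finally show ?thesis unfolding t(3)[symmetric] t_def[symmetric] .
qed

lemma lp_triangle:
  assumes p: "1 \<le> p" and x: "in_lp p x" and y: "in_lp p y"
  shows "in_lp p (\<lambda>i. x i + y i) \<and> lp_norm p (\<lambda>i. x i + y i) \<le> lp_norm p x + lp_norm p y"
proof (cases "p = \<infinity>")
  case True
  have bdd_x: "bdd_above (range (\<lambda>i. \<bar>x i\<bar>))" and bdd_y: "bdd_above (range (\<lambda>i. \<bar>y i\<bar>))"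
    using x y True by (simp_all add: in_lp_def)
  have le: "\<bar>x i + y i\<bar> \<le> (SUP i. \<bar>x i\<bar>) + (SUP i. \<bar>y i\<bar>)" for i
  proof -
    have "\<bar>x i\<bar> \<le> (SUP i. \<bar>x i\<bar>)" using bdd_x by (rule cSUP_upper[rotated]) auto
    moreover have "\<bar>y i\<bar> \<le> (SUP i. \<bar>y i\<bar>)" using bdd_y by (rule cSUP_upper[rotated]) auto
    ultimately show ?thesis by linarith
  qed
  then have "bdd_above (range (\<lambda>i. \<bar>x i + y i\<bar>))" by (rule bdd_aboveI2)
  moreover have "(SUP i. \<bar>x i + y i\<bar>) \<le> (SUP i. \<bar>x i\<bar>) + (SUP i. \<bar>y i\<bar>)"
    using le by (intro cSUP_least) auto
  ultimately show ?thesis using True by (simp add: in_lp_def lp_norm_def)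
next
  case False
  define q where "q = real_of_ereal p"
  have q: "1 \<le> q" using real_of_ereal_ge_1[OF p False] q_def by simp
  define a b where "a = lp_norm p x" and "b = lp_norm p y"
  consider "a = 0" | "b = 0" | "0 < a" "0 < b"
    using lp_norm_nonneg[OF p x] lp_norm_nonneg[OF p y] a_def b_def by linarith
  then show ?thesis
  proof cases
    case 1
    then show ?thesis using lp_norm_eq_0_iff[OF p x] y a_def by simp
  next
    case 2
    then show ?thesis using lp_norm_eq_0_iff[OF p y] x b_def by simp
  next
    case 3
    define Sx Sy where "Sx = (\<Sum>i. \<bar>x i\<bar> powr q)" and "Sy = (\<Sum>i. \<bar>y i\<bar> powr q)"
    have sx: "summable (\<lambda>i. \<bar>x i\<bar> powr q)" and sy: "summable (\<lambda>i. \<bar>y i\<bar> powr q)"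
      using x y False by (simp_all add: in_lp_def q_def)
    have "0 \<le> Sx" "0 \<le> Sy"
      unfolding Sx_def Sy_def by (auto intro: suminf_nonneg sx sy)
    then have Sx: "a powr q = Sx" and Sy: "b powr q = Sy"
      using False q by (simp_all add: a_def b_def Sx_def Sy_def lp_norm_def q_def powr_powr)
    define g where "g i = (a + b) powr q * (a / (a + b) * (\<bar>x i\<bar> powr q / Sx) + b / (a + b) * (\<bar>y i\<bar> powr q / Sy))" for i
    have "g sums ((a + b) powr q * (a / (a + b) * (Sx / Sx) + b / (a + b) * (Sy / Sy)))"
      unfolding g_def Sx_def Sy_def by (intro sums_mult sums_add sums_divide sums_mult summable_sums sx sy)
    moreover have "Sx \<noteq> 0" "Sy \<noteq> 0" using Sx Sy 3 by auto
    ultimately have g: "g sums ((a + b) powr q)"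
      using 3 by (simp add: add_divide_distrib[symmetric])
    have le_g: "\<bar>x i + y i\<bar> powr q \<le> g i" for i
      using abs_add_powr_le[OF q 3(1) 3(2), of "x i" "y i"] 3 Sx Sy by (simp add: g_def powr_divide)
    have sxy: "summable (\<lambda>i. \<bar>x i + y i\<bar> powr q)"
      by (rule summable_comparison_test[of _ g]) (use le_g g in \<open>auto simp: sums_iff\<close>)
    have "(\<Sum>i. \<bar>x i + y i\<bar> powr q) \<le> (a + b) powr q"
      using suminf_le[OF le_g sxy] g by (simp add: sums_iff)
    then have "(\<Sum>i. \<bar>x i + y i\<bar> powr q) powr (1/q) \<le> ((a + b) powr q) powr (1/q)"
      using q by (intro powr_mono2) (auto intro: suminf_nonneg[OF sxy])
    also have "\<dots> = a + b" using 3 q by (simp add: powr_powr)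
    finally show ?thesis using sxy False by (simp add: in_lp_def lp_norm_def q_def a_def b_def)
  qed
qed

lemma lp_sum:
  assumes p: "1 \<le> p" and A: "finite A" and f: "\<And>j. j \<in> A \<Longrightarrow> in_lp p (f j)"
  shows "in_lp p (\<lambda>i. \<Sum>j\<in>A. f j i) \<and> lp_norm p (\<lambda>i. \<Sum>j\<in>A. f j i) \<le> (\<Sum>j\<in>A. lp_norm p (f j))"
  using A f
proof (induction A rule: finite_induct)
  case empty
  then show ?case by (simp add: in_lp_finite_support)
next
  case (insert a A)
  then show ?case using lp_triangle[OF p, of "f a" "\<lambda>i. \<Sum>j\<in>A. f j i"] by auto
qed

lemma lp_fatou:
  assumes p: "1 \<le> p" and lim: "\<And>i. (\<lambda>n. x n i) \<longlonglongrightarrow> y i"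
    and x: "\<And>n. in_lp p (x n)" and bound: "\<And>n. lp_norm p (x n) \<le> B"
  shows "in_lp p y \<and> lp_norm p y \<le> B"
proof -
  have B: "0 \<le> B" using lp_norm_nonneg[OF p x, of 0] bound[of 0] by simp
  have abs_y: "\<bar>y i\<bar> \<le> B" for i
  proof (rule LIMSEQ_le_const2)
    show "(\<lambda>n. \<bar>x n i\<bar>) \<longlonglongrightarrow> \<bar>y i\<bar>" by (intro tendsto_rabs lim)
    show "\<exists>N. \<forall>n\<ge>N. \<bar>x n i\<bar> \<le> B" using abs_le_lp_norm[OF p x] bound by (meson order.trans)
  qed
  show ?thesis
  proof (cases "p = \<infinity>")
    case True
    have "bdd_above (range (\<lambda>i. \<bar>y i\<bar>))" using abs_y by (rule bdd_aboveI2)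
    moreover have "(SUP i. \<bar>y i\<bar>) \<le> B" using abs_y by (intro cSUP_least) auto
    ultimately show ?thesis using True by (simp add: in_lp_def lp_norm_def)
  next
    case False
    define q where "q = real_of_ereal p"
    have q: "1 \<le> q" using real_of_ereal_ge_1[OF p False] q_def by simp
    have sx: "summable (\<lambda>i. \<bar>x n i\<bar> powr q)" for n using x[of n] False by (simp add: in_lp_def q_def)
    have sum_x: "(\<Sum>i. \<bar>x n i\<bar> powr q) \<le> B powr q" for n
    proof -
      have S: "0 \<le> (\<Sum>i. \<bar>x n i\<bar> powr q)" by (intro suminf_nonneg[OF sx]) auto
      have "((\<Sum>i. \<bar>x n i\<bar> powr q) powr (1/q)) powr q \<le> B powr q"
        using bound[of n] False q S by (intro powr_mono2) (auto simp: lp_norm_def q_def)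
      then show ?thesis using q S by (simp add: powr_powr)
    qed
    have partial_y: "(\<Sum>i<K. \<bar>y i\<bar> powr q) \<le> B powr q" for K
    proof (rule LIMSEQ_le_const2)
      show "(\<lambda>n. \<Sum>i<K. \<bar>x n i\<bar> powr q) \<longlonglongrightarrow> (\<Sum>i<K. \<bar>y i\<bar> powr q)"
        using q by (intro tendsto_sum tendsto_powr' tendsto_rabs lim tendsto_const) auto
      show "\<exists>N. \<forall>n\<ge>N. (\<Sum>i<K. \<bar>x n i\<bar> powr q) \<le> B powr q"
        using sum_le_suminf[OF sx] sum_x by (meson finite_lessThan order.trans powr_ge_zero)
    qed
    have sy: "summable (\<lambda>i. \<bar>y i\<bar> powr q)" by (rule summableI_nonneg_bounded[OF _ partial_y]) auto
    have "(\<Sum>i. \<bar>y i\<bar> powr q) \<le> B powr q" by (rule suminf_le_const[OF sy partial_y])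
    then have "(\<Sum>i. \<bar>y i\<bar> powr q) powr (1/q) \<le> (B powr q) powr (1/q)"
      using q by (intro powr_mono2) (auto intro: suminf_nonneg[OF sy])
    also have "\<dots> = B" using B q by (simp add: powr_powr)
    finally show ?thesis using sy False by (simp add: in_lp_def lp_norm_def q_def)
  qed
qed

section \<open>Operator norms of matrices\<close>

lemma mat_opnorm_inf_le:
  assumes bound: "\<And>x. \<forall>j\<ge>k. x j = 0 \<Longrightarrow> lp_norm p x \<le> 1 \<Longrightarrow> lp_norm p (\<lambda>i. \<Sum>j<k. M i j * x j) \<le> B"
  shows "0 \<le> mat_opnorm_inf p k M" and "mat_opnorm_inf p k M \<le> B"
proof -
  define S where "S = {x. (\<forall>j\<ge>k. x j = 0) \<and> lp_norm p x \<le> 1}"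
  have zero: "(\<lambda>_. 0) \<in> S" by (simp add: S_def)
  have op: "mat_opnorm_inf p k M = (SUP x\<in>S. lp_norm p (\<lambda>i. \<Sum>j<k. M i j * x j))"
    by (simp add: mat_opnorm_inf_def S_def)
  have "bdd_above ((\<lambda>x. lp_norm p (\<lambda>i. \<Sum>j<k. M i j * x j)) ` S)"
    using bound by (intro bdd_aboveI2) (auto simp: S_def)
  from cSUP_upper[OF zero this] show "0 \<le> mat_opnorm_inf p k M" by (simp add: op)
  show "mat_opnorm_inf p k M \<le> B" unfolding op using bound zero by (intro cSUP_least) (auto simp: S_def)
qed

lemma mat_opnorm_inf_le_mult:
  assumes p: "1 \<le> p" and B: "0 \<le> B"
    and bound: "\<And>x. \<forall>j\<ge>k. x j = 0 \<Longrightarrow> lp_norm p (\<lambda>i. \<Sum>j<k. M i j * x j) \<le> B * lp_norm p x"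
  shows "0 \<le> mat_opnorm_inf p k M" and "mat_opnorm_inf p k M \<le> B"
proof -
  have "lp_norm p (\<lambda>i. \<Sum>j<k. M i j * x j) \<le> B" if "\<forall>j\<ge>k. x j = 0" "lp_norm p x \<le> 1" for x
    using bound[OF that(1)] mult_left_mono[OF that(2) B] by simp
  then show "0 \<le> mat_opnorm_inf p k M" "mat_opnorm_inf p k M \<le> B"
    using mat_opnorm_inf_le by blast+
qed

lemma lp_norm_mat_apply_le_col_sum:
  assumes p: "1 \<le> p" and rows: "\<And>i j. r \<le> i \<Longrightarrow> M i j = 0"
    and x: "\<forall>j\<ge>k. x j = 0" "lp_norm p x \<le> 1"
  shows "lp_norm p (\<lambda>i. \<Sum>j<k. M i j * x j) \<le> (\<Sum>j<k. lp_norm p (\<lambda>i. M i j))"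
proof -
  have col: "in_lp p (\<lambda>i. M i j)" for j by (rule in_lp_finite_support[of r]) (use rows in auto)
  have x_lp: "in_lp p x" using x(1) in_lp_finite_support by blast
  have "lp_norm p (\<lambda>i. \<Sum>j<k. x j * M i j) \<le> (\<Sum>j<k. lp_norm p (\<lambda>i. x j * M i j))"
    using lp_sum[OF p, of "{..<k}" "\<lambda>j i. x j * M i j"] lp_mult[OF p col] by auto
  also have "\<dots> \<le> (\<Sum>j<k. lp_norm p (\<lambda>i. M i j))"
  proof (rule sum_mono)
    fix j
    have "lp_norm p (\<lambda>i. x j * M i j) \<le> \<bar>x j\<bar> * lp_norm p (\<lambda>i. M i j)"
      using lp_mult[OF p col] by blast
    also have "\<dots> \<le> lp_norm p (\<lambda>i. M i j)"
      using abs_le_lp_norm[OF p x_lp, of j] x(2) lp_norm_nonneg[OF p col]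
      by (intro mult_left_le_one_le) auto
    finally show "lp_norm p (\<lambda>i. x j * M i j) \<le> lp_norm p (\<lambda>i. M i j)" .
  qed
  finally show ?thesis by (simp add: mult.commute)
qed

lemma mat_opnorm_inf_nonneg:
  "1 \<le> p \<Longrightarrow> (\<And>i j. r \<le> i \<Longrightarrow> M i j = 0) \<Longrightarrow> 0 \<le> mat_opnorm_inf p k M"
  by (rule mat_opnorm_inf_le(1), rule lp_norm_mat_apply_le_col_sum) assumption+

lemma lp_norm_mat_apply_le:
  assumes p: "1 \<le> p" and rows: "\<And>i j. r \<le> i \<Longrightarrow> M i j = 0" and x: "\<forall>j\<ge>k. x j = 0"
  shows "lp_norm p (\<lambda>i. \<Sum>j<k. M i j * x j) \<le> mat_opnorm_inf p k M * lp_norm p x"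
proof -
  have bdd: "bdd_above ((\<lambda>y. lp_norm p (\<lambda>i. \<Sum>j<k. M i j * y j)) ` {y. (\<forall>j\<ge>k. y j = 0) \<and> lp_norm p y \<le> 1})"
    using lp_norm_mat_apply_le_col_sum[OF p rows] by (intro bdd_aboveI2) auto
  have unit_ball: "lp_norm p (\<lambda>i. \<Sum>j<k. M i j * y j) \<le> mat_opnorm_inf p k M"
    if "\<forall>j\<ge>k. y j = 0" "lp_norm p y \<le> 1" for y
    unfolding mat_opnorm_inf_def by (rule cSUP_upper[OF _ bdd]) (use that in auto)
  have x_lp: "in_lp p x" using x in_lp_finite_support by blast
  define nx where "nx = lp_norm p x"
  show ?thesis
  proof (cases "nx = 0")
    case True
    then show ?thesis using lp_norm_eq_0_iff[OF p x_lp] nx_def by simp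
  next
    case False
    then have nx: "0 < nx" using lp_norm_nonneg[OF p x_lp] nx_def by simp
    define y where "y j = (1 / nx) * x j" for j
    have "lp_norm p y \<le> \<bar>1 / nx\<bar> * nx"
      using lp_mult[OF p x_lp, of "1 / nx"] unfolding y_def nx_def by blast
    then have y_unit: "lp_norm p y \<le> 1" using nx by simp
    have y: "lp_norm p (\<lambda>i. \<Sum>j<k. M i j * y j) \<le> mat_opnorm_inf p k M"
      by (rule unit_ball[OF _ y_unit]) (simp add: y_def x)
    have "in_lp p (\<lambda>i. \<Sum>j<k. M i j * y j)"
      by (rule in_lp_finite_support[of r]) (use rows in auto)
    moreover have "(\<lambda>i. \<Sum>j<k. M i j * x j) = (\<lambda>i. nx * (\<Sum>j<k. M i j * y j))"
      using nx by (auto simp: y_def sum_distrib_left)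
    ultimately have "lp_norm p (\<lambda>i. \<Sum>j<k. M i j * x j) \<le> nx * lp_norm p (\<lambda>i. \<Sum>j<k. M i j * y j)"
      using lp_mult[OF p, of _ nx] nx by simp
    also have "\<dots> \<le> nx * mat_opnorm_inf p k M" using y nx by simp
    finally show ?thesis by (simp add: nx_def mult.commute)
  qed
qed

section \<open>Products of perturbed identities\<close>

lemma le_exp_sum_if_growth:
  fixes a b :: "nat \<Rightarrow> real"
  assumes growth: "\<And>n. N \<le> n \<Longrightarrow> b (Suc n) \<le> (1 + a n) * b n"
    and a: "\<And>n. 0 \<le> a n" and b: "\<And>n. 0 \<le> b n" and "N \<le> n"
  shows "b n \<le> b N * exp (\<Sum>l\<in>{N..<n}. a l)"
  using \<open>N \<le> n\<close>
proof (induction n rule: dec_induct)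
  case base
  then show ?case by simp
next
  case (step n)
  have "b (Suc n) \<le> (1 + a n) * b n" using growth step.hyps(1) .
  also have "\<dots> \<le> exp (a n) * (b N * exp (\<Sum>l\<in>{N..<n}. a l))"
    using a[of n] b[of n] step.IH by (intro mult_mono) auto
  also have "\<dots> = b N * exp (\<Sum>l\<in>{N..<Suc n}. a l)"
    using step.hyps(1) by (simp add: exp_add)
  finally show ?case .
qed

lemma sum_atLeastLessThan_le_suminf_shift:
  fixes a :: "nat \<Rightarrow> real"
  assumes "summable a" and "\<And>n. 0 \<le> a n"
  shows "(\<Sum>l\<in>{n..<K}. a l) \<le> (\<Sum>l. a (l + n))"
proof (cases "n \<le> K")
  case True
  have "(\<Sum>l\<in>{n..<K}. a l) = (\<Sum>l<K - n. a (l + n))"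
    using True sum.shift_bounds_nat_ivl[of a 0 n "K - n"] by (simp add: lessThan_atLeast0 add.commute)
  also have "\<dots> \<le> (\<Sum>l. a (l + n))"
    using assms by (intro sum_le_suminf) (auto simp: summable_iff_shift)
  finally show ?thesis .
next
  case False
  then show ?thesis using assms by (simp add: suminf_nonneg summable_iff_shift)
qed

lemma Cauchy_if_dist_le_tail:
  fixes f :: "nat \<Rightarrow> 'a::metric_space"
  assumes dist: "\<And>n K. N \<le> n \<Longrightarrow> n \<le> K \<Longrightarrow> dist (f K) (f n) \<le> T n" and T: "T \<longlonglongrightarrow> 0"
  shows "Cauchy f"
proof (rule metric_CauchyI)
  fix e :: real assume "0 < e"
  then have "\<forall>\<^sub>F n in sequentially. T n < e / 2 \<and> N \<le> n"
    using T by (intro eventually_conj order_tendstoD(2) eventually_ge_at_top) auto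
  then obtain M where M: "T M < e / 2" "N \<le> M" by (auto simp: eventually_sequentially)
  have "dist (f n) (f M) < e / 2" if "M \<le> n" for n
    using dist[OF M(2) that] M(1) by linarith
  then show "\<exists>M. \<forall>m\<ge>M. \<forall>n\<ge>M. dist (f m) (f n) < e"
    by (metis dist_commute dist_triangle_half_r)
qed

locale perturbed_identity_product =
  fixes p :: ereal and d :: nat and m :: "nat \<Rightarrow> nat" and W P :: "nat \<Rightarrow> nat \<Rightarrow> nat \<Rightarrow> real"
  assumes p: "1 \<le> p"
    and m_mono: "\<forall>n\<ge>1. m n \<le> m (Suc n)"
    and W_eq: "\<forall>n\<ge>1. \<forall>i<m n. \<forall>j<m (n - 1). W n i j = Imat i j + P n i j"
    and summable_pert: "summable (\<lambda>n. mat_opnorm p (m (Suc n)) (m n) (P (Suc n)))"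
begin

abbreviation E :: "nat \<Rightarrow> nat \<Rightarrow> nat \<Rightarrow> real" where
  "E \<equiv> embedded_prod m W"

definition prod_apply :: "nat \<Rightarrow> (nat \<Rightarrow> real) \<Rightarrow> nat \<Rightarrow> real" where
  "prod_apply n x i = (\<Sum>j<d. E n i j * x j)"

definition pert :: "nat \<Rightarrow> nat \<Rightarrow> nat \<Rightarrow> real" where
  "pert n i j = (if i < m (Suc n) then P (Suc n) i j else 0)"

definition pert_norm :: "nat \<Rightarrow> real" where
  "pert_norm n = mat_opnorm p (m (Suc n)) (m n) (P (Suc n))"

lemma pert_norm_eq: "pert_norm n = mat_opnorm_inf p (m n) (pert n)"
  by (simp add: pert_norm_def mat_opnorm_def pert_def[abs_def])

lemma pert_norm_nonneg: "0 \<le> pert_norm n"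
  unfolding pert_norm_eq by (rule mat_opnorm_inf_nonneg[OF p, of "m (Suc n)"]) (simp add: pert_def)

lemma summable_pert_norm: "summable pert_norm"
  using summable_pert by (simp add: pert_norm_def[abs_def])

lemma prod_apply_eq_0: "m n \<le> i \<Longrightarrow> prod_apply n x i = 0"
  by (simp add: prod_apply_def embedded_prod_def)

lemma in_lp_prod_apply: "in_lp p (prod_apply n x)"
  by (rule in_lp_finite_support[of "m n"]) (simp add: prod_apply_eq_0)

lemma prod_apply_Suc_eq_sum:
  assumes "i < m (Suc n)"
  shows "prod_apply (Suc n) x i = (\<Sum>k<m n. W (Suc n) i k * prod_apply n x k)"
proof -
  have "prod_apply (Suc n) x i = (\<Sum>j<d. (\<Sum>k<m n. W (Suc n) i k * mat_prod m W n k j) * x j)"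
    using assms by (simp add: prod_apply_def embedded_prod_def)
  also have "\<dots> = (\<Sum>k<m n. W (Suc n) i k * (\<Sum>j<d. mat_prod m W n k j * x j))"
    by (simp add: sum_distrib_left sum_distrib_right mult.assoc sum.swap[of _ "{..<d}"])
  also have "\<dots> = (\<Sum>k<m n. W (Suc n) i k * prod_apply n x k)"
    by (simp add: prod_apply_def embedded_prod_def)
  finally show ?thesis .
qed

lemma prod_apply_Suc:
  assumes "1 \<le> n"
  shows "prod_apply (Suc n) x i = prod_apply n x i + (\<Sum>k<m n. pert n i k * prod_apply n x k)"
proof (cases "i < m (Suc n)")
  case True
  have "prod_apply (Suc n) x i = (\<Sum>k<m n. (Imat i k + P (Suc n) i k) * prod_apply n x k)"
    unfolding prod_apply_Suc_eq_sum[OF True] using W_eq True by (intro sum.cong) auto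
  also have "\<dots> = (\<Sum>k<m n. Imat i k * prod_apply n x k) + (\<Sum>k<m n. pert n i k * prod_apply n x k)"
    using True by (simp add: distrib_right sum.distrib pert_def)
  also have "(\<Sum>k<m n. Imat i k * prod_apply n x k) = (\<Sum>k<m n. if k = i then prod_apply n x k else 0)"
    by (intro sum.cong) (auto simp: Imat_def)
  also have "\<dots> = prod_apply n x i"
    using prod_apply_eq_0[of n i x] by (simp add: sum.delta')
  finally show ?thesis .
next
  case False
  then have "m n \<le> i" using m_mono assms by (meson le_trans not_le)
  then show ?thesis using False by (simp add: prod_apply_eq_0 pert_def)
qed

lemma lp_norm_prod_apply_Suc_diff:
  assumes "1 \<le> n"
  shows "lp_norm p (\<lambda>i. prod_apply (Suc n) x i - prod_apply n x i) \<le> pert_norm n * lp_norm p (prod_apply n x)"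
  unfolding prod_apply_Suc[OF assms] pert_norm_eq
  by (simp, rule lp_norm_mat_apply_le[OF p, of "m (Suc n)"]) (auto simp: pert_def prod_apply_eq_0)

definition prod_bound :: real where
  "prod_bound = mat_opnorm_inf p d (E 1) * exp (suminf pert_norm)"

lemma mat_opnorm_inf_first_nonneg: "0 \<le> mat_opnorm_inf p d (E 1)"
  by (rule mat_opnorm_inf_nonneg[OF p, of "m 1"]) (simp add: embedded_prod_def)

lemma prod_bound_nonneg: "0 \<le> prod_bound"
  unfolding prod_bound_def using mat_opnorm_inf_first_nonneg by simp

lemma in_lp_prod_apply_diff: "in_lp p (\<lambda>i. prod_apply K x i - prod_apply n x i)"
  by (rule in_lp_finite_support[of "max (m K) (m n)"]) (simp add: prod_apply_eq_0)

lemma lp_norm_prod_apply_le: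
  assumes n: "1 \<le> n" and x: "\<forall>j\<ge>d. x j = 0"
  shows "lp_norm p (prod_apply n x) \<le> prod_bound * lp_norm p x"
proof -
  have growth: "lp_norm p (prod_apply (Suc l) x) \<le> (1 + pert_norm l) * lp_norm p (prod_apply l x)"
    if "1 \<le> l" for l
  proof -
    have "lp_norm p (prod_apply (Suc l) x)
        \<le> lp_norm p (prod_apply l x) + lp_norm p (\<lambda>i. prod_apply (Suc l) x i - prod_apply l x i)"
      using lp_triangle[OF p in_lp_prod_apply[of l x] in_lp_prod_apply_diff[of "Suc l" x l]] by simp
    then show ?thesis using lp_norm_prod_apply_Suc_diff[OF that, of x] by (simp add: algebra_simps)
  qed
  have "lp_norm p (prod_apply n x) \<le> lp_norm p (prod_apply 1 x) * exp (\<Sum>l\<in>{1..<n}. pert_norm l)"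
    by (rule le_exp_sum_if_growth[where b = "\<lambda>l. lp_norm p (prod_apply l x)", OF growth pert_norm_nonneg lp_norm_nonneg[OF p in_lp_prod_apply] n])
  also have "\<dots> \<le> (mat_opnorm_inf p d (E 1) * lp_norm p x) * exp (suminf pert_norm)"
  proof (rule mult_mono)
    show "lp_norm p (prod_apply 1 x) \<le> mat_opnorm_inf p d (E 1) * lp_norm p x"
      unfolding prod_apply_def[abs_def]
      by (rule lp_norm_mat_apply_le[OF p _ x, of "m 1"]) (simp add: embedded_prod_def)
    show "exp (\<Sum>l\<in>{1..<n}. pert_norm l) \<le> exp (suminf pert_norm)"
      using sum_le_suminf[OF summable_pert_norm, of "{1..<n}"] pert_norm_nonneg by simp
  qed (use mat_opnorm_inf_first_nonneg lp_norm_nonneg[OF p in_lp_finite_support[OF x]] in auto)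
  finally show ?thesis by (simp add: prod_bound_def ac_simps)
qed

definition tail :: "nat \<Rightarrow> real" where
  "tail n = (\<Sum>l. pert_norm (l + n))"

lemma tail_tendsto_0: "tail \<longlonglongrightarrow> 0"
  unfolding tail_def by (rule suminf_exist_split2[OF summable_pert_norm])

lemma tail_nonneg: "0 \<le> tail n"
  unfolding tail_def
  using summable_pert_norm pert_norm_nonneg by (simp add: suminf_nonneg summable_iff_shift)

lemma lp_norm_prod_apply_diff_le:
  assumes n: "1 \<le> n" "n \<le> K" and x: "\<forall>j\<ge>d. x j = 0"
  shows "lp_norm p (\<lambda>i. prod_apply K x i - prod_apply n x i) \<le> prod_bound * lp_norm p x * tail n"
proof -
  have "(\<lambda>i. prod_apply K x i - prod_apply n x i) = (\<lambda>i. \<Sum>l\<in>{n..<K}. prod_apply (Suc l) x i - prod_apply l x i)"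
    by (rule ext) (rule sum_Suc_diff'[OF n(2), symmetric])
  then have "lp_norm p (\<lambda>i. prod_apply K x i - prod_apply n x i)
      \<le> (\<Sum>l\<in>{n..<K}. lp_norm p (\<lambda>i. prod_apply (Suc l) x i - prod_apply l x i))"
    using lp_sum[OF p, of "{n..<K}" "\<lambda>l i. prod_apply (Suc l) x i - prod_apply l x i"]
    by (simp add: in_lp_prod_apply_diff)
  also have "\<dots> \<le> (\<Sum>l\<in>{n..<K}. pert_norm l * (prod_bound * lp_norm p x))"
  proof (rule sum_mono)
    fix l assume "l \<in> {n..<K}"
    then have "1 \<le> l" using n by simp
    then show "lp_norm p (\<lambda>i. prod_apply (Suc l) x i - prod_apply l x i) \<le> pert_norm l * (prod_bound * lp_norm p x)"
      using lp_norm_prod_apply_Suc_diff lp_norm_prod_apply_le[OF _ x] pert_norm_nonneg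
      by (meson mult_left_mono order.trans)
  qed
  also have "\<dots> \<le> tail n * (prod_bound * lp_norm p x)"
    unfolding sum_distrib_right[symmetric] tail_def
    using sum_atLeastLessThan_le_suminf_shift[OF summable_pert_norm pert_norm_nonneg]
      prod_bound_nonneg lp_norm_nonneg[OF p in_lp_finite_support[OF x]]
    by (intro mult_right_mono) auto
  finally show ?thesis by (simp add: ac_simps)
qed

definition limit :: "nat \<Rightarrow> nat \<Rightarrow> real" where
  "limit i j = lim (\<lambda>n. E n i j)"

lemma prod_apply_unit_vector: "j < d \<Longrightarrow> prod_apply n (\<lambda>l. if l = j then 1 else 0) i = E n i j"
  by (simp add: prod_apply_def if_distrib[where f = "\<lambda>c. _ * c"] sum.delta cong: if_cong)

lemma embedded_prod_tendsto_limit: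
  assumes j: "j < d"
  shows "(\<lambda>n. E n i j) \<longlonglongrightarrow> limit i j"
proof -
  define e where "e = (\<lambda>l. if l = j then 1 else (0::real))"
  have e: "\<forall>l\<ge>d. e l = 0" "lp_norm p e \<le> 1"
    using j lp_norm_unit_vector_le[OF p] by (auto simp: e_def)
  have "dist (E K i j) (E n i j) \<le> prod_bound * tail n" if "1 \<le> n" "n \<le> K" for n K
  proof -
    have "dist (E K i j) (E n i j) \<le> lp_norm p (\<lambda>i. prod_apply K e i - prod_apply n e i)"
      using abs_le_lp_norm[OF p in_lp_prod_apply_diff[of K e n], of i] j by (simp add: dist_real_def e_def prod_apply_unit_vector)
    also have "\<dots> \<le> prod_bound * lp_norm p e * tail n"
      by (rule lp_norm_prod_apply_diff_le[OF that e(1)])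
    also have "\<dots> \<le> prod_bound * tail n"
      using e(2) prod_bound_nonneg tail_nonneg[of n] by (intro mult_right_mono mult_left_le) auto
    finally show ?thesis .
  qed
  then have "Cauchy (\<lambda>n. E n i j)"
    by (rule Cauchy_if_dist_le_tail) (use tendsto_mult[OF tendsto_const tail_tendsto_0, of prod_bound] in auto)
  then show ?thesis
    unfolding limit_def by (simp add: Cauchy_convergent_iff convergent_LIMSEQ_iff)
qed

lemma prod_apply_tendsto: "(\<lambda>n. prod_apply n x i) \<longlonglongrightarrow> (\<Sum>j<d. limit i j * x j)"
  unfolding prod_apply_def by (intro tendsto_sum tendsto_mult embedded_prod_tendsto_limit tendsto_const) auto

lemma lp_norm_sub_limit_apply_le:
  assumes n: "1 \<le> n" and x: "\<forall>j\<ge>d. x j = 0"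
  shows "lp_norm p (\<lambda>i. \<Sum>j<d. (E n i j - limit i j) * x j) \<le> prod_bound * tail n * lp_norm p x"
proof -
  have "in_lp p (\<lambda>i. (\<Sum>j<d. limit i j * x j) - prod_apply n x i) \<and>
      lp_norm p (\<lambda>i. (\<Sum>j<d. limit i j * x j) - prod_apply n x i) \<le> prod_bound * lp_norm p x * tail n"
  proof (rule lp_fatou[OF p])
    show "(\<lambda>K. prod_apply (K + n) x i - prod_apply n x i) \<longlonglongrightarrow> (\<Sum>j<d. limit i j * x j) - prod_apply n x i" for i
      by (intro tendsto_diff tendsto_const LIMSEQ_ignore_initial_segment prod_apply_tendsto)
    show "lp_norm p (\<lambda>i. prod_apply (K + n) x i - prod_apply n x i) \<le> prod_bound * lp_norm p x * tail n" for K
      using lp_norm_prod_apply_diff_le[OF n, of "K + n"] x by simp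
  qed (rule in_lp_prod_apply_diff)
  moreover have "(\<lambda>i. \<Sum>j<d. (E n i j - limit i j) * x j) = (\<lambda>i. prod_apply n x i - (\<Sum>j<d. limit i j * x j))"
    by (simp add: prod_apply_def left_diff_distrib sum_subtractf)
  ultimately show ?thesis by (simp add: lp_norm_minus_commute ac_simps)
qed

lemma in_lp_limit_column:
  assumes j: "j < d"
  shows "in_lp p (\<lambda>i. limit i j)"
proof -
  define e where "e = (\<lambda>l. if l = j then 1 else (0::real))"
  have e: "\<forall>l\<ge>d. e l = 0" "lp_norm p e \<le> 1"
    using j lp_norm_unit_vector_le[OF p] by (auto simp: e_def)
  have "in_lp p (\<lambda>i. limit i j) \<and> lp_norm p (\<lambda>i. limit i j) \<le> prod_bound"
  proof (rule lp_fatou[OF p, of "\<lambda>n. prod_apply (Suc n) e"])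
    show "(\<lambda>n. prod_apply (Suc n) e i) \<longlonglongrightarrow> limit i j" for i
      using LIMSEQ_Suc[OF embedded_prod_tendsto_limit[OF j]] j by (simp add: e_def prod_apply_unit_vector)
    show "lp_norm p (prod_apply (Suc n) e) \<le> prod_bound" for n
      using lp_norm_prod_apply_le[OF _ e(1), of "Suc n"] mult_left_mono[OF e(2) prod_bound_nonneg] by simp
  qed (rule in_lp_prod_apply)
  then show ?thesis ..
qed

lemma embedded_prod_tendsto_limit_opnorm:
  "(\<lambda>n. mat_opnorm_inf p d (\<lambda>i j. E n i j - limit i j)) \<longlonglongrightarrow> 0"
proof (rule tendsto_sandwich[of "\<lambda>_. 0" _ _ "\<lambda>n. prod_bound * tail n"])
  have "0 \<le> mat_opnorm_inf p d (\<lambda>i j. E n i j - limit i j) \<and>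
      mat_opnorm_inf p d (\<lambda>i j. E n i j - limit i j) \<le> prod_bound * tail n" if "1 \<le> n" for n
    using mat_opnorm_inf_le_mult[OF p mult_nonneg_nonneg[OF prod_bound_nonneg tail_nonneg]
        lp_norm_sub_limit_apply_le[OF that]] by simp
  then show "\<forall>\<^sub>F n in sequentially. 0 \<le> mat_opnorm_inf p d (\<lambda>i j. E n i j - limit i j)"
    and "\<forall>\<^sub>F n in sequentially. mat_opnorm_inf p d (\<lambda>i j. E n i j - limit i j) \<le> prod_bound * tail n"
    by (auto simp: eventually_sequentially)
  show "(\<lambda>n. prod_bound * tail n) \<longlonglongrightarrow> 0"
    using tendsto_mult[OF tendsto_const tail_tendsto_0, of prod_bound] by simp
qed simp

end

theorem corollary4p4:
  fixes p :: ereal and d :: nat and m :: "nat \<Rightarrow> nat"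
    and W P :: "nat \<Rightarrow> nat \<Rightarrow> nat \<Rightarrow> real"
  assumes p: "1 \<le> p"
    and d: "d \<ge> 1"
    and m0: "m 0 = d"
    and mpos: "\<forall>n\<ge>1. 0 < m n"
    and mmono: "\<forall>n\<ge>1. m n \<le> m (Suc n)"
    and WP: "\<forall>n\<ge>1. \<forall>i<m n. \<forall>j<m (n - 1). W n i j = Imat i j + P n i j"
    and summ: "summable (\<lambda>n. mat_opnorm p (m (Suc n)) (m n) (P (Suc n)))"
  shows "\<exists>L :: nat \<Rightarrow> nat \<Rightarrow> real.
           (\<forall>j<d. in_lp p (\<lambda>i. L i j)) \<and>
           (\<lambda>n. mat_opnorm_inf p d (\<lambda>i j. embedded_prod m W n i j - L i j))
             \<longlonglongrightarrow> 0"
proof -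
  interpret perturbed_identity_product p d m W P
    using p mmono WP summ by unfold_locales
  show ?thesis
    using in_lp_limit_column embedded_prod_tendsto_limit_opnorm by blast
qed

end
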